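(* Let $\|\cdot\|$ be a norm on $\mathbb{R}^d$. For each integer $m>2$ let $E_m=\{T\subseteq\mathbb{R}^d\mid |T|=m \text{ and } T \text{ contains two points } x,y \text{ with } \|x-y\|=1\}$ and $\mathcal{G}_m=(\mathbb{R}^d,E_m)$. Then $\chi(\mathcal{G}_m)=\chi((\mathbb{R}^d,\|\cdot\|),1)$ for all such $m$.
   Context: $\chi((\mathbb{R}^d,\|\cdot\|),1)$ denotes the chromatic number of the unit distance graph of $(\mathbb{R}^d,\|\cdot\|)$, i.e. the graph on $\mathbb{R}^d$ whose edges are the pairs $\{x,y\}$ with $\|x-y\|=1$. A hypergraph $(V,E)$ has edges that are subsets of $V$ of size at least $2$; a proper coloring makes no edge monochromatic; $\chi$ is the least number of colors of a proper coloring. *)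

theory Defs
  imports "HOL-Analysis.Analysis" "HOL-Library.Extended_Nat"
begin

definition is_norm :: "('a::real_vector \<Rightarrow> real) \<Rightarrow> bool" where
  "is_norm N \<longleftrightarrow>
     (\<forall>x. N x = 0 \<longleftrightarrow> x = 0) \<and>
     (\<forall>a x. N (a *\<^sub>R x) = \<bar>a\<bar> * N x) \<and>
     (\<forall>x y. N (x + y) \<le> N x + N y)"

definition hyp_proper_coloring :: "'a set \<Rightarrow> 'a set set \<Rightarrow> ('a \<Rightarrow> 'c) \<Rightarrow> bool" where
  "hyp_proper_coloring V E c \<longleftrightarrow> (\<forall>e\<in>E. \<not> (\<exists>k. \<forall>x\<in>e. c x = k))"

definition hyp_chromatic_number :: "'a set \<Rightarrow> 'a set set \<Rightarrow> enat" where
  "hyp_chromatic_number V E =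
     (if \<exists>k::nat. \<exists>c::'a \<Rightarrow> nat. (\<forall>x\<in>V. c x < k) \<and> hyp_proper_coloring V E c
      then enat (LEAST k::nat. \<exists>c::'a \<Rightarrow> nat. (\<forall>x\<in>V. c x < k) \<and> hyp_proper_coloring V E c)
      else \<infinity>)"

definition unit_distance_chromatic_number :: "('a::real_vector \<Rightarrow> real) \<Rightarrow> enat" where
  "unit_distance_chromatic_number N =
     (if \<exists>k::nat. \<exists>c::'a \<Rightarrow> nat. (\<forall>x. c x < k) \<and> (\<forall>x y. N (x - y) = 1 \<longrightarrow> c x \<noteq> c y)
      then enat (LEAST k::nat. \<exists>c::'a \<Rightarrow> nat. (\<forall>x. c x < k) \<and>
                                 (\<forall>x y. N (x - y) = 1 \<longrightarrow> c x \<noteq> c y))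
      else \<infinity>)"

definition unit_hyperedges :: "('a::real_vector \<Rightarrow> real) \<Rightarrow> nat \<Rightarrow> 'a set set" where
  "unit_hyperedges N m = {T. finite T \<and> card T = m \<and> (\<exists>x\<in>T. \<exists>y\<in>T. N (x - y) = 1)}"

end

theory Submission
  imports Defs
begin

text \<open>In a proper coloring of the hypergraph with finitely many colors only finitely many points
  share their color with a point at distance 1: such a color class is finite, for otherwise m - 2
  further points of it complete a monochromatic hyperedge. A suitable translate of the coloring
  moves any given finite configuration away from these bad points, so every finite subgraph of the
  unit distance graph is properly colored, and the de Bruijn-Erdos compactness argument (in the
  compact product space of all colorings) colors the whole graph. Conversely a proper coloring of
  the unit distance graph is proper for the hypergraph, since every hyperedge contains a unit pair.\<close>

lemma is_norm_zero: "is_norm N \<Longrightarrow> N 0 = 0"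
  unfolding is_norm_def by blast

lemma infinite_UNIV_if_nonzero:
  fixes v :: "'a::real_vector"
  assumes "v \<noteq> 0"
  shows "infinite (UNIV :: 'a set)"
proof
  assume "finite (UNIV :: 'a set)"
  then have "finite (range (\<lambda>r::real. r *\<^sub>R v))"
    by (rule finite_subset[rotated]) simp
  moreover have "inj (\<lambda>r::real. r *\<^sub>R v)"
    using assms by (simp add: inj_on_def)
  ultimately show False
    using finite_imageD infinite_UNIV_char_0 by blast
qed

lemma hyp_proper_coloring_unit_hyperedges:
  assumes "\<forall>x y. N (x - y) = 1 \<longrightarrow> c x \<noteq> c y"
  shows "hyp_proper_coloring V (unit_hyperedges N m) c"
  unfolding hyp_proper_coloring_def
proof (intro ballI notI)
  fix T assume "T \<in> unit_hyperedges N m" and "\<exists>j. \<forall>x \<in> T. c x = j"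
  then obtain x y j where "N (x - y) = 1" "c x = j" "c y = j"
    unfolding unit_hyperedges_def by blast
  then show False
    using assms[rule_format, of x y] by metis
qed

lemma finite_color_class_of_unit_pair:
  fixes N :: "'a::real_vector \<Rightarrow> real"
  assumes "is_norm N" and "m \<ge> 2"
    and proper: "hyp_proper_coloring V (unit_hyperedges N m) c"
    and unit: "N (x - y) = 1" and "c y = c x"
  shows "finite {u. c u = c x}"
proof (rule ccontr)
  assume "infinite {u. c u = c x}"
  then have "infinite ({u. c u = c x} - {x, y})" by simp
  then obtain T where T: "finite T" "card T = m - 2" "T \<subseteq> {u. c u = c x} - {x, y}"
    using infinite_arbitrarily_large by blast
  have "x \<noteq> y"
    using unit is_norm_zero[OF \<open>is_norm N\<close>] by auto
  moreover have "x \<notin> T" "y \<notin> T"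
    using T by auto
  ultimately have "card (insert x (insert y T)) = m"
    using T \<open>m \<ge> 2\<close> by simp
  with T unit have "insert x (insert y T) \<in> unit_hyperedges N m"
    unfolding unit_hyperedges_def by auto
  moreover have "\<forall>u \<in> insert x (insert y T). c u = c x"
    using T \<open>c y = c x\<close> by auto
  ultimately show False
    using proper unfolding hyp_proper_coloring_def by blast
qed

lemma finite_points_with_monochromatic_unit_neighbour:
  fixes N :: "'a::real_vector \<Rightarrow> real"
  assumes "is_norm N" and "m \<ge> 2"
    and "hyp_proper_coloring V (unit_hyperedges N m) c" and "\<forall>x. c x < (k::nat)"
  shows "finite {z. \<exists>w. N (z - w) = 1 \<and> c w = c z}"
    (is "finite ?B")
proof -
  have "finite {u. c u = j}" if "j \<in> c ` ?B" for j
  proof -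
    from that obtain z w where "j = c z" "N (z - w) = 1" "c w = c z"
      by blast
    then show ?thesis
      using finite_color_class_of_unit_pair[OF assms(1-3), of z w] by simp
  qed
  moreover have "finite (c ` ?B)"
    using assms(4) by (intro finite_subset[OF _ finite_lessThan[of k]]) blast
  ultimately have "finite (\<Union>j \<in> c ` ?B. {u. c u = j})"
    by (intro finite_UN_I)
  moreover have "?B \<subseteq> (\<Union>j \<in> c ` ?B. {u. c u = j})"
    by blast
  ultimately show ?thesis
    by (rule finite_subset[rotated])
qed

lemma translate_coloring_proper_on_finite_unit_pairs:
  fixes N :: "'a::real_vector \<Rightarrow> real"
  assumes "is_norm N" and "m \<ge> 2"
    and "hyp_proper_coloring V (unit_hyperedges N m) c" and bounded: "\<forall>x. c x < (k::nat)"
    and Q: "Q \<subseteq> {(x, y). N (x - y) = 1}" "finite Q"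
  shows "\<exists>g. (\<forall>x. g x < k) \<and> (\<forall>(x, y) \<in> Q. g x \<noteq> g y)"
proof (cases "Q = {}")
  case True
  then show ?thesis using bounded by blast
next
  case False
  define B where "B = {z. \<exists>w. N (z - w) = 1 \<and> c w = c z}"
  have "finite B"
    unfolding B_def by (rule finite_points_with_monochromatic_unit_neighbour[OF assms(1-4)])
  then have "finite ((\<lambda>(b, x). b - x) ` (B \<times> fst ` Q))"
    using Q by simp
  moreover obtain x y where "N (x - y) = 1"
    using False Q by blast
  then have "x - y \<noteq> 0"
    using is_norm_zero[OF \<open>is_norm N\<close>] by auto
  then have "infinite (UNIV :: 'a set)"
    by (rule infinite_UNIV_if_nonzero)
  ultimately obtain t where t: "t \<notin> (\<lambda>(b, x). b - x) ` (B \<times> fst ` Q)"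
    using ex_new_if_finite by blast
  have separated: "c (x + t) \<noteq> c (y + t)" if "(x, y) \<in> Q" for x y
  proof
    assume "c (x + t) = c (y + t)"
    moreover have "N ((x + t) - (y + t)) = 1"
      using that Q by auto
    ultimately have "N ((x + t) - (y + t)) = 1 \<and> c (y + t) = c (x + t)"
      by simp
    then have "x + t \<in> B"
      unfolding B_def by blast
    moreover have "x \<in> fst ` Q"
      using that by force
    ultimately have "t \<in> (\<lambda>(b, x). b - x) ` (B \<times> fst ` Q)"
      by (intro rev_image_eqI[of "(x + t, x)"]) simp_all
    with t show False ..
  qed
  show ?thesis
  proof (intro exI[of _ "\<lambda>u. c (u + t)"] conjI)
    show "\<forall>x. c (x + t) < k"
      using bounded by blast
    show "\<forall>(x, y) \<in> Q. c (x + t) \<noteq> c (y + t)"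
      using separated by blast
  qed
qed

lemma closedin_product_discrete_neq:
  assumes "a \<in> I" and "b \<in> I"
  shows "closedin (product_topology (\<lambda>_. discrete_topology K) I)
           {g \<in> topspace (product_topology (\<lambda>_. discrete_topology K) I). g a \<noteq> g b}"
proof -
  let ?X = "product_topology (\<lambda>_. discrete_topology K) I"
  have "continuous_map ?X (discrete_topology (K \<times> K)) (\<lambda>g. (g a, g b))"
    unfolding prod_topology_discrete_topology
    using assms by (intro continuous_map_pairedI continuous_map_product_projection)
  then have "closedin ?X {g \<in> topspace ?X. (g a, g b) \<in> {(u, v) \<in> K \<times> K. u \<noteq> v}}"
    by (rule closedin_continuous_map_preimage) auto
  moreover have "{g \<in> topspace ?X. (g a, g b) \<in> {(u, v) \<in> K \<times> K. u \<noteq> v}}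
      = {g \<in> topspace ?X. g a \<noteq> g b}"
    using assms by (auto simp: PiE_iff)
  ultimately show ?thesis
    by simp
qed

lemma coloring_compactness:
  fixes P :: "('a \<times> 'a) set" and k :: nat
  assumes finite_colorable:
    "\<And>Q. Q \<subseteq> P \<Longrightarrow> finite Q \<Longrightarrow> \<exists>g. (\<forall>x. g x < k) \<and> (\<forall>(x, y) \<in> Q. g x \<noteq> g y)"
  shows "\<exists>g. (\<forall>x. g x < k) \<and> (\<forall>(x, y) \<in> P. g x \<noteq> g y)"
proof -
  define X where "X = product_topology (\<lambda>_::'a. discrete_topology {..<k}) UNIV"
  define C where "C p = {g \<in> topspace X. g (fst p) \<noteq> g (snd p)}" for p
  have topspace: "topspace X = {g. \<forall>x. g x < k}"
    unfolding X_def by (auto simp: PiE_UNIV_domain Pi_iff)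
  have compact: "compact_space X"
    unfolding X_def by (simp add: compact_space_product_topology compact_space_discrete_topology)
  have "closedin X (C p)" for p
    unfolding C_def X_def by (rule closedin_product_discrete_neq) simp_all
  then have closed: "\<forall>S \<in> insert (topspace X) (C ` P). closedin X S"
    by auto
  have fip: "\<forall>F. finite F \<and> F \<subseteq> insert (topspace X) (C ` P) \<longrightarrow> \<Inter>F \<noteq> {}"
  proof (intro allI impI, elim conjE)
    fix F assume F: "finite F" "F \<subseteq> insert (topspace X) (C ` P)"
    then have "finite (F - {topspace X})" "F - {topspace X} \<subseteq> C ` P"
      by auto
    from finite_subset_image[OF this] obtain Q
      where Q: "Q \<subseteq> P" "finite Q" "F - {topspace X} = C ` Q"
      by blast
    obtain g where "\<forall>x. g x < k" "\<forall>(x, y) \<in> Q. g x \<noteq> g y"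
      using finite_colorable[OF Q(1,2)] by blast
    then have "g \<in> \<Inter>(insert (topspace X) (C ` Q))"
      unfolding C_def topspace by auto
    moreover have "F \<subseteq> insert (topspace X) (C ` Q)"
      using Q(3) by blast
    ultimately have "g \<in> \<Inter>F"
      by blast
    then show "\<Inter>F \<noteq> {}"
      by blast
  qed
  obtain g where "g \<in> \<Inter>(insert (topspace X) (C ` P))"
    using compact_space_fip[THEN iffD1, OF compact, rule_format, OF conjI[OF closed fip]] by blast
  then have "\<forall>x. g x < k" "\<forall>(x, y) \<in> P. g x \<noteq> g y"
    unfolding C_def topspace by auto
  then show ?thesis
    by blast
qed

lemma hyperedges_colorable_iff_unit_distance_colorable:
  fixes N :: "'a::real_vector \<Rightarrow> real"
  assumes "is_norm N" and "m \<ge> 2"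
  shows "(\<exists>c::'a \<Rightarrow> nat. (\<forall>x. c x < k) \<and> hyp_proper_coloring V (unit_hyperedges N m) c)
     \<longleftrightarrow> (\<exists>c::'a \<Rightarrow> nat. (\<forall>x. c x < k) \<and> (\<forall>x y. N (x - y) = 1 \<longrightarrow> c x \<noteq> c y))"
proof
  assume "\<exists>c. (\<forall>x. c x < k) \<and> hyp_proper_coloring V (unit_hyperedges N m) c"
  then obtain c :: "'a \<Rightarrow> nat"
    where c: "\<forall>x. c x < k" "hyp_proper_coloring V (unit_hyperedges N m) c"
    by blast
  have "\<exists>g. (\<forall>x. g x < k) \<and> (\<forall>(x, y) \<in> {(x, y). N (x - y) = 1}. g x \<noteq> g y)"
  proof (rule coloring_compactness)
    fix Q assume "Q \<subseteq> {(x, y). N (x - y) = 1}" "finite Q"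
    then show "\<exists>g. (\<forall>x. g x < k) \<and> (\<forall>(x, y) \<in> Q. g x \<noteq> g y)"
      by (rule translate_coloring_proper_on_finite_unit_pairs[OF assms c(2,1)])
  qed
  then show "\<exists>c::'a \<Rightarrow> nat. (\<forall>x. c x < k) \<and> (\<forall>x y. N (x - y) = 1 \<longrightarrow> c x \<noteq> c y)"
    by fast
next
  assume "\<exists>c::'a \<Rightarrow> nat. (\<forall>x. c x < k) \<and> (\<forall>x y. N (x - y) = 1 \<longrightarrow> c x \<noteq> c y)"
  then obtain c :: "'a \<Rightarrow> nat"
    where "\<forall>x. c x < k" "\<forall>x y. N (x - y) = 1 \<longrightarrow> c x \<noteq> c y"
    by blast
  then show "\<exists>c. (\<forall>x. c x < k) \<and> hyp_proper_coloring V (unit_hyperedges N m) c"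
    using hyp_proper_coloring_unit_hyperedges by blast
qed

theorem corollary4p4p1:
  fixes N :: "real ^ 'd \<Rightarrow> real" and m :: nat
  assumes "is_norm N"
    and "m > 2"
  shows "hyp_chromatic_number (UNIV :: (real ^ 'd) set) (unit_hyperedges N m)
           = unit_distance_chromatic_number N"
proof -
  have "m \<ge> 2"
    using assms(2) by simp
  note colorable_iff =
    hyperedges_colorable_iff_unit_distance_colorable[OF assms(1) this, where V = UNIV]
  show ?thesis
    unfolding hyp_chromatic_number_def unit_distance_chromatic_number_def ball_UNIV colorable_iff ..
qed

end
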